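(* Let $S$ be finite, $r$ transition rates of an irreducible random walk on $S$ reversible w.r.t. a probability $m$, with $S_\star$ decomposed into the classes $S_1^{(2)},\dots,S_{\kappa_\star}^{(2)}$ of the context, $\kappa_\star\ge2$. Let $(d_N)$ be positive with $d_N\to0$, $d_N\log N\to0$, decaying subexponentially, and $d_NN^2(\log N)^2\to0$. Then for every $1\le i\le\kappa_\star$, $$\lim_{N\to\infty}\frac{\mathrm{Cap}_N\big(\mathcal{E}_N(S_i^{(2)}),\mathcal{E}_N(S_\star\setminus S_i^{(2)})\big)}{\inf_{\eta,\zeta\in\mathcal{E}_N(S_i^{(2)})}\mathrm{Cap}_N(\{\eta\},\{\zeta\})}=0,$$ where the infimum is over distinct $\eta,\zeta$ (an infimum over the empty set being $+\infty$).
   Context: $M_\star=\max m$, $S_\star=\{x:m(x)=M_\star\}$, $m_\star=m/M_\star$. $S_1^{(2)},\dots,S_{\kappa_\star}^{(2)}$ partition $S_\star$ into irreducible components of the walk restricted to $S_\star$ (rates restricted to each class irreducible, $r=0$ between different classes). Subexponential decay: $d_Ne^{\epsilon N}\to\infty$ for every $\epsilon>0$. $\mathcal{H}_N=\{\eta\in\mathbb{N}^S:\sum\eta_x=N\}$; inclusion process jump rates $\mathbf{q}_N(\eta,\sigma^{x,y}\eta)=\eta_x(d_N+\eta_y)r(x,y)$ ($\sigma^{x,y}\eta$ moves one particle from $x$ to $y$); invariant reversible measure $\mu_N(\eta)\propto\prod_xw_N(\eta_x)m_\star(x)^{\eta_x}$, $w_N(n)=\Gamma(d_N+n)/(n!\Gamma(d_N))$.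 $\xi_N^x$: all particles at $x$; $\mathcal{E}_N(R)=\{\xi_N^x:x\in R\}$. $h_{\mathcal{A},\mathcal{B}}(\eta)=\mathbb{P}_\eta[\tau_{\mathcal{A}}<\tau_{\mathcal{B}}]$, $D_N(f)=\frac12\sum\mu_N(\eta)\mathbf{q}_N(\eta,\zeta)\{f(\zeta)-f(\eta)\}^2$, $\mathrm{Cap}_N(\mathcal{A},\mathcal{B})=D_N(h_{\mathcal{A},\mathcal{B}})$. *)

theory Defs
  imports "HOL-Analysis.Analysis"
begin

type_synonym 'a config = "'a \<Rightarrow> nat"

definition Hn :: "nat \<Rightarrow> ('a::finite) config set" where
  "Hn N = {\<eta>. (\<Sum>x\<in>UNIV. \<eta> x) = N}"

definition sigma :: "'a \<Rightarrow> 'a \<Rightarrow> 'a config \<Rightarrow> 'a config" where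
  "sigma x y \<eta> = \<eta>(x := \<eta> x - 1, y := \<eta> y + 1)"

definition qrate :: "('a::finite \<Rightarrow> 'a \<Rightarrow> real) \<Rightarrow> real \<Rightarrow> 'a config \<Rightarrow> 'a config \<Rightarrow> real" where
  "qrate r dN \<eta> \<zeta> =
     (\<Sum>(x,y)\<in>{(x,y). x \<noteq> y}.
        if 1 \<le> \<eta> x \<and> \<zeta> = sigma x y \<eta> then real (\<eta> x) * (dN + real (\<eta> y)) * r x y else 0)"

definition jump_prob :: "('a::finite \<Rightarrow> 'a \<Rightarrow> real) \<Rightarrow> real \<Rightarrow> nat \<Rightarrow> 'a config \<Rightarrow> 'a config \<Rightarrow> real" where
  "jump_prob r dN N \<eta> \<zeta> = qrate r dN \<eta> \<zeta> / (\<Sum>\<zeta>'\<in>Hn N. qrate r dN \<eta> \<zeta>')"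

text \<open>h_{A,B}(eta) = P_eta[tau_A < tau_B]: the sum, over all finite jump paths
  eta = eta_0, ..., eta_k that hit A at step k and avoid A and B before, of the path
  probabilities (the event is the disjoint union of these cylinder events).\<close>
definition hit_prob :: "('a::finite \<Rightarrow> 'a \<Rightarrow> real) \<Rightarrow> real \<Rightarrow> nat \<Rightarrow> 'a config set \<Rightarrow> 'a config set
    \<Rightarrow> 'a config \<Rightarrow> real" where
  "hit_prob r dN N A B \<eta> =
     suminf (\<lambda>k. \<Sum>xs\<in>{xs. length xs = k \<and> set xs \<subseteq> Hn N}.
        (if last (\<eta> # xs) \<in> A \<and> (\<forall>z\<in>set (butlast (\<eta> # xs)). z \<notin> A \<union> B)
         then prod_list (map (\<lambda>(a,b). jump_prob r dN N a b) (zip (\<eta> # xs) xs))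
         else 0))"

definition Mstar :: "('a::finite \<Rightarrow> real) \<Rightarrow> real" where
  "Mstar m = Max (range m)"

definition Sstar :: "('a::finite \<Rightarrow> real) \<Rightarrow> 'a set" where
  "Sstar m = {x. m x = Mstar m}"

definition mstar :: "('a::finite \<Rightarrow> real) \<Rightarrow> 'a \<Rightarrow> real" where
  "mstar m x = m x / Mstar m"

definition wN :: "real \<Rightarrow> nat \<Rightarrow> real" where
  "wN dN n = Gamma (dN + real n) / (fact n * Gamma dN)"

definition mu_weight :: "('a::finite \<Rightarrow> real) \<Rightarrow> real \<Rightarrow> 'a config \<Rightarrow> real" where
  "mu_weight m dN \<eta> = (\<Prod>x\<in>UNIV. wN dN (\<eta> x) * mstar m x ^ \<eta> x)"

definition muN :: "('a::finite \<Rightarrow> real) \<Rightarrow> real \<Rightarrow> nat \<Rightarrow> 'a config \<Rightarrow> real" where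
  "muN m dN N \<eta> = mu_weight m dN \<eta> / (\<Sum>\<zeta>\<in>Hn N. mu_weight m dN \<zeta>)"

definition Dirichlet :: "('a::finite \<Rightarrow> 'a \<Rightarrow> real) \<Rightarrow> ('a \<Rightarrow> real) \<Rightarrow> real \<Rightarrow> nat
    \<Rightarrow> ('a config \<Rightarrow> real) \<Rightarrow> real" where
  "Dirichlet r m dN N f =
     1/2 * (\<Sum>\<eta>\<in>Hn N. \<Sum>\<zeta>\<in>Hn N. muN m dN N \<eta> * qrate r dN \<eta> \<zeta> * (f \<zeta> - f \<eta>)^2)"

definition Cap :: "('a::finite \<Rightarrow> 'a \<Rightarrow> real) \<Rightarrow> ('a \<Rightarrow> real) \<Rightarrow> real \<Rightarrow> nat
    \<Rightarrow> 'a config set \<Rightarrow> 'a config set \<Rightarrow> real" where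
  "Cap r m dN N A B = Dirichlet r m dN N (hit_prob r dN N A B)"

definition xi :: "nat \<Rightarrow> 'a \<Rightarrow> 'a config" where
  "xi N x = (\<lambda>y. if y = x then N else 0)"

definition EN :: "nat \<Rightarrow> 'a set \<Rightarrow> 'a config set" where
  "EN N R = xi N ` R"

definition star_edges :: "('a::finite \<Rightarrow> 'a \<Rightarrow> real) \<Rightarrow> ('a \<Rightarrow> real) \<Rightarrow> ('a \<times> 'a) set" where
  "star_edges r m = {(x,y). x \<in> Sstar m \<and> y \<in> Sstar m \<and> r x y > 0}"

definition star_class :: "('a::finite \<Rightarrow> 'a \<Rightarrow> real) \<Rightarrow> ('a \<Rightarrow> real) \<Rightarrow> 'a \<Rightarrow> 'a set" where
  "star_class r m x = {y \<in> Sstar m. (x,y) \<in> (star_edges r m)\<^sup>*}"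

definition star_classes :: "('a::finite \<Rightarrow> 'a \<Rightarrow> real) \<Rightarrow> ('a \<Rightarrow> real) \<Rightarrow> 'a set set" where
  "star_classes r m = star_class r m ` Sstar m"

end

theory Submission
  imports Defs
begin

text \<open>
  Both capacities are compared through the unnormalised Dirichlet form \<open>energy\<close>; the partition
  function cancels in the ratio.

  Upper bound: by the Dirichlet principle the capacity between \<open>E_N(C)\<close> and \<open>E_N(S_star - C)\<close> is
  at most the energy of the fraction of particles in \<open>C\<close>. This function changes only along
  edges leaving \<open>C\<close>, and each such edge has an endpoint \<open>x\<close> off \<open>S_star\<close>, where
  \<open>mstar m x < 1\<close>. Since \<open>w_N(k) \<le> e d_N / k\<close> as long as \<open>d_N harm N \<le> 1\<close>, the weight of
  configurations with particles at \<open>x\<close> is summable geometrically, and the energy is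
  \<open>O(d_N^2 / N^2)\<close>.

  Lower bound: moving the \<open>N\<close> particles one by one from \<open>b\<close> to a neighbour \<open>c\<close> in \<open>S_star\<close>
  passes through configurations of conductance at least \<open>d_N^2 r b c\<close>, so by Cauchy-Schwarz a
  function with values \<open>1\<close> and \<open>0\<close> at \<open>xi N b\<close> and \<open>xi N c\<close> has energy at least
  \<open>d_N^2 r b c / N\<close>. Chaining along paths inside the class gives \<open>d_N^2 / (K N)\<close> for every
  pair of configurations \<open>xi N x\<close>, \<open>xi N y\<close> with \<open>x, y \<in> C\<close>.

  Hence the ratio is \<open>O(1/N)\<close>.
\<close>

lemma wN_0: "0 < d \<Longrightarrow> wN d 0 = 1"
  using Gamma_real_pos[of d] by (simp add: wN_def less_imp_neq[symmetric])

lemma wN_pos: "0 < d \<Longrightarrow> 0 < wN d k"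
  unfolding wN_def using Gamma_real_pos[of "d + real k"] Gamma_real_pos[of d] by simp

lemma wN_Suc:
  assumes "0 < d"
  shows "wN d (Suc k) * (real k + 1) = wN d k * (d + real k)"
proof -
  have "d + real k \<notin> \<int>\<^sub>\<le>\<^sub>0"
    using assms by (metis add_pos_nonneg nonpos_Ints_nonpos not_le of_nat_0_le_iff)
  from Gamma_plus1[OF this]
  have "wN d (Suc k) = (d + real k) * Gamma (d + real k) / ((real k + 1) * (fact k * Gamma d))"
    unfolding wN_def by (simp add: ac_simps)
  also have "\<dots> = wN d k * (d + real k) / (real k + 1)"
    unfolding wN_def by (simp add: ac_simps)
  finally show ?thesis
    by (simp add: field_simps)
qed

lemma harm_le_1_plus_ln: "1 \<le> n \<Longrightarrow> harm n \<le> 1 + ln (real n)"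
  using euler_mascheroni_sequence_decreasing[of 1 n] by (simp add: harm_def)

lemma wN_times_index_bounds:
  assumes d: "0 < d" and k: "1 \<le> k"
  shows "d \<le> wN d k * real k \<and> wN d k * real k \<le> d * exp (d * harm (k - 1))"
  using k
proof (induction k rule: dec_induct)
  case base
  then show ?case using wN_Suc[OF d, of 0] wN_0[OF d] by (simp add: harm_def)
next
  case (step k)
  have rec: "wN d (Suc k) * real (Suc k) = wN d k * real k * (1 + d / real k)"
    using wN_Suc[OF d, of k] step(1) by (simp add: field_simps)
  have harm_k: "harm k = harm (k - 1) + 1 / real k"
    using step(1) by (cases k) (auto simp: harm_Suc field_simps)
  have "wN d k * real k * (1 + d / real k) \<le> d * exp (d * harm (k - 1)) * exp (d / real k)"
  proof (rule mult_mono)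
    show "1 + d / real k \<le> exp (d / real k)"
      by (simp add: exp_ge_add_one_self add.commute)
  qed (use step(3) d in auto)
  also have "\<dots> = d * exp (d * harm k)"
    by (simp add: harm_k exp_add[symmetric] field_simps)
  finally have upper: "wN d (Suc k) * real (Suc k) \<le> d * exp (d * harm (Suc k - 1))"
    using rec by simp
  have "wN d k * real k * 1 \<le> wN d k * real k * (1 + d / real k)"
    using step(3) d by (intro mult_left_mono) auto
  then show ?case using upper rec step(3) by simp
qed

lemma wN_times_shift_ge:
  assumes d: "0 < d"
  shows "d \<le> wN d k * (d + real k)"
proof (cases "k = 0")
  case True
  then show ?thesis using wN_0[OF d] by simp
next
  case False
  then have "d \<le> wN d k * real k"
    using wN_times_index_bounds[OF d, of k] by auto
  also have "\<dots> \<le> wN d k * (d + real k)"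
    using wN_pos[OF d, of k] d by simp
  finally show ?thesis .
qed

lemma Hn_subset_PiE: "Hn N \<subseteq> PiE UNIV (\<lambda>_. {..N})"
proof
  fix \<eta> :: "'a::finite config"
  assume "\<eta> \<in> Hn N"
  then have "\<eta> x \<le> N" for x
    using member_le_sum[of x UNIV \<eta>] by (simp add: Hn_def)
  then show "\<eta> \<in> PiE UNIV (\<lambda>_. {..N})" by auto
qed

lemma finite_Hn: "finite (Hn N :: 'a::finite config set)"
  by (rule finite_subset[OF Hn_subset_PiE]) (simp add: finite_PiE)

lemma xi_in_Hn: "xi N x \<in> Hn N"
  unfolding Hn_def xi_def by simp

lemma sigma_eq_iff:
  "x \<noteq> y \<Longrightarrow> (1 \<le> \<eta> x \<and> \<zeta> = sigma x y \<eta>) \<longleftrightarrow> (1 \<le> \<zeta> y \<and> \<eta> = sigma y x \<zeta>)"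
  unfolding sigma_def by (auto simp: fun_eq_iff)

definition split_config :: "nat \<Rightarrow> 'a \<Rightarrow> 'a \<Rightarrow> nat \<Rightarrow> 'a config"
  where "split_config N b c k = (\<lambda>u. (if u = b then N - k else 0) + (if u = c then k else 0))"

lemma split_config_in_Hn: "k \<le> N \<Longrightarrow> split_config N b c k \<in> Hn N"
  unfolding Hn_def split_config_def by (simp add: sum.distrib)

lemma split_config_0: "b \<noteq> c \<Longrightarrow> split_config N b c 0 = xi N b"
  unfolding split_config_def xi_def by (auto simp: fun_eq_iff)

lemma split_config_all: "b \<noteq> c \<Longrightarrow> split_config N b c N = xi N c"
  unfolding split_config_def xi_def by (auto simp: fun_eq_iff)

lemma sigma_split_config:
  "b \<noteq> c \<Longrightarrow> k < N \<Longrightarrow> sigma b c (split_config N b c k) = split_config N b c (Suc k)"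
  unfolding split_config_def sigma_def by (auto simp: fun_eq_iff)

lemma prod_UNIV_remove2:
  fixes f :: "'a::finite \<Rightarrow> 'b::comm_monoid_mult"
  assumes "x \<noteq> y"
  shows "prod f UNIV = f x * f y * prod f (UNIV - {x, y})"
proof -
  have "prod f UNIV = f x * prod f (UNIV - {x})"
    by (rule prod.remove) auto
  also have "prod f (UNIV - {x}) = f y * prod f (UNIV - {x} - {y})"
    by (rule prod.remove) (use assms in auto)
  finally show ?thesis
    by (simp add: Diff_insert2[symmetric] insert_commute mult.assoc)
qed

lemma sum_Hn_prod_le:
  fixes F :: "'a::finite \<Rightarrow> nat \<Rightarrow> real"
  assumes F_nonneg: "\<And>u k. 0 \<le> F u k" and F_bound: "\<And>k. k \<le> N \<Longrightarrow> F x k \<le> M"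
  shows "(\<Sum>\<eta>\<in>Hn N. \<Prod>u\<in>UNIV. F u (\<eta> u)) \<le> M * (\<Prod>u\<in>UNIV - {x}. \<Sum>k\<le>N. F u k)"
proof -
  let ?U = "UNIV - {x}"
  have "0 \<le> M"
    using F_bound[of 0] F_nonneg[of x 0] by simp
  have inj: "inj_on (\<lambda>\<eta>. restrict \<eta> ?U) (Hn N)"
  proof (rule inj_onI)
    fix \<eta> \<eta>' assume \<eta>: "\<eta> \<in> Hn N" and \<eta>': "\<eta>' \<in> Hn N" and "restrict \<eta> ?U = restrict \<eta>' ?U"
    then have off_x: "\<eta> u = \<eta>' u" if "u \<noteq> x" for u
      using that by (metis DiffI UNIV_I restrict_apply' singletonD)
    have "sum \<theta> UNIV = \<theta> x + sum \<theta> ?U" for \<theta> :: "'a config"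
      by (rule sum.remove) auto
    moreover have "sum \<eta> ?U = sum \<eta>' ?U"
      using off_x by (intro sum.cong) auto
    ultimately have "\<eta> x = \<eta>' x"
      using \<eta> \<eta>' by (simp add: Hn_def)
    then show "\<eta> = \<eta>'"
      using off_x by (metis ext)
  qed
  have "(\<Sum>\<eta>\<in>Hn N. \<Prod>u\<in>UNIV. F u (\<eta> u)) \<le> (\<Sum>\<eta>\<in>Hn N. M * (\<Prod>u\<in>?U. F u (\<eta> u)))"
  proof (rule sum_mono)
    fix \<eta> :: "'a config" assume "\<eta> \<in> Hn N"
    then have "F x (\<eta> x) \<le> M"
      using Hn_subset_PiE by (intro F_bound) (auto simp: PiE_iff)
    moreover have "(\<Prod>u\<in>UNIV. F u (\<eta> u)) = F x (\<eta> x) * (\<Prod>u\<in>?U. F u (\<eta> u))"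
      by (rule prod.remove) auto
    ultimately show "(\<Prod>u\<in>UNIV. F u (\<eta> u)) \<le> M * (\<Prod>u\<in>?U. F u (\<eta> u))"
      by (simp add: F_nonneg mult_right_mono prod_nonneg)
  qed
  also have "\<dots> = M * (\<Sum>\<theta>\<in>(\<lambda>\<eta>. restrict \<eta> ?U) ` Hn N. \<Prod>u\<in>?U. F u (\<theta> u))"
    by (simp add: sum_distrib_left sum.reindex[OF inj])
  also have "\<dots> \<le> M * (\<Sum>\<theta>\<in>PiE ?U (\<lambda>_. {..N}). \<Prod>u\<in>?U. F u (\<theta> u))"
    using \<open>0 \<le> M\<close> by (intro mult_left_mono sum_mono2 prod_nonneg F_nonneg)
      (auto simp: finite_PiE PiE_iff split: if_splits dest!: subsetD[OF Hn_subset_PiE])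
  also have "\<dots> = M * (\<Prod>u\<in>?U. \<Sum>k\<le>N. F u k)"
    by (simp add: prod_sum_PiE)
  finally show ?thesis .
qed

definition edge_rate :: "('a \<Rightarrow> 'a \<Rightarrow> real) \<Rightarrow> real \<Rightarrow> 'a config \<Rightarrow> 'a config
    \<Rightarrow> 'a \<Rightarrow> 'a \<Rightarrow> real"
  where "edge_rate r d \<eta> \<zeta> x y =
    (if 1 \<le> \<eta> x \<and> \<zeta> = sigma x y \<eta> then real (\<eta> x) * (d + real (\<eta> y)) * r x y else 0)"

lemma qrate_eq_sum_edge_rate: "qrate r d \<eta> \<zeta> = (\<Sum>(x, y)\<in>{(x, y). x \<noteq> y}. edge_rate r d \<eta> \<zeta> x y)"
  unfolding qrate_def edge_rate_def by simp

lemma edge_rate_nonneg: "(\<And>x y. 0 \<le> r x y) \<Longrightarrow> 0 < d \<Longrightarrow> 0 \<le> edge_rate r d \<eta> \<zeta> x y"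
  unfolding edge_rate_def by auto

lemma qrate_nonneg: "(\<And>x y. 0 \<le> r x y) \<Longrightarrow> 0 < d \<Longrightarrow> 0 \<le> qrate r d \<eta> \<zeta>"
  unfolding qrate_eq_sum_edge_rate by (intro sum_nonneg) (auto intro: edge_rate_nonneg)

definition energy :: "('a::finite \<Rightarrow> 'a \<Rightarrow> real) \<Rightarrow> ('a \<Rightarrow> real) \<Rightarrow> real \<Rightarrow> nat
    \<Rightarrow> ('a config \<Rightarrow> real) \<Rightarrow> real"
  where "energy r m d N f =
    (\<Sum>\<eta>\<in>Hn N. \<Sum>\<zeta>\<in>Hn N. mu_weight m d \<eta> * qrate r d \<eta> \<zeta> * (f \<zeta> - f \<eta>)\<^sup>2)"

definition partition_sum :: "('a::finite \<Rightarrow> real) \<Rightarrow> real \<Rightarrow> nat \<Rightarrow> real"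
  where "partition_sum m d N = (\<Sum>\<zeta>\<in>Hn N. mu_weight m d \<zeta>)"

lemma Dirichlet_eq_energy: "Dirichlet r m d N f = energy r m d N f / (2 * partition_sum m d N)"
  unfolding Dirichlet_def energy_def partition_sum_def muN_def
  by (simp add: sum_divide_distrib mult.commute)

locale reversible_walk =
  fixes r :: "'a::finite \<Rightarrow> 'a \<Rightarrow> real" and m :: "'a \<Rightarrow> real"
  assumes r_nonneg: "0 \<le> r x y"
    and m_nonneg: "0 \<le> m x"
    and m_prob: "(\<Sum>x\<in>UNIV. m x) = 1"
    and reversible: "m x * r x y = m y * r y x"
begin

lemma Mstar_pos: "0 < Mstar m"
proof -
  obtain x where "0 < m x"
    using m_prob m_nonneg by (metis le_less sum.neutral zero_neq_one)
  moreover have "m x \<le> Mstar m"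
    unfolding Mstar_def by (rule Max_ge) auto
  ultimately show ?thesis by simp
qed

lemma mstar_nonneg: "0 \<le> mstar m x"
  unfolding mstar_def using Mstar_pos m_nonneg by simp

lemma mstar_le_1: "mstar m x \<le> 1"
proof -
  have "m x \<le> Mstar m"
    unfolding Mstar_def by (rule Max_ge) auto
  then show ?thesis
    unfolding mstar_def using Mstar_pos by simp
qed

lemma mstar_eq_1_iff: "mstar m x = 1 \<longleftrightarrow> x \<in> Sstar m"
  unfolding mstar_def Sstar_def using Mstar_pos by auto

lemma mstar_reversible: "mstar m x * r x y = mstar m y * r y x"
  unfolding mstar_def using reversible by (metis times_divide_eq_left)

lemma mu_weight_nonneg: "0 < d \<Longrightarrow> 0 \<le> mu_weight m d \<eta>"
  unfolding mu_weight_def using wN_pos mstar_nonneg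
  by (intro prod_nonneg mult_nonneg_nonneg zero_le_power) (auto simp: less_imp_le)

lemma energy_nonneg: "0 < d \<Longrightarrow> 0 \<le> energy r m d N f"
  unfolding energy_def using mu_weight_nonneg qrate_nonneg[of r, OF r_nonneg]
  by (intro sum_nonneg mult_nonneg_nonneg) auto

lemma edge_detailed_balance:
  assumes d: "0 < d" and xy: "x \<noteq> y"
  shows "mu_weight m d \<eta> * edge_rate r d \<eta> \<zeta> x y = mu_weight m d \<zeta> * edge_rate r d \<zeta> \<eta> y x"
proof (cases "1 \<le> \<eta> x \<and> \<zeta> = sigma x y \<eta>")
  case False
  moreover have "\<not> (1 \<le> \<zeta> y \<and> \<eta> = sigma y x \<zeta>)"
    using False sigma_eq_iff[OF xy] by blast
  ultimately show ?thesis
    unfolding edge_rate_def by (simp only: if_False mult_zero_right)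
next
  case True
  then have reverse_move: "1 \<le> \<zeta> y \<and> \<eta> = sigma y x \<zeta>"
    using sigma_eq_iff[OF xy] by blast
  obtain n where n: "\<eta> x = Suc n"
    using True by (cases "\<eta> x") auto
  define k where "k = \<eta> y"
  have \<zeta>x: "\<zeta> x = n" and \<zeta>y: "\<zeta> y = Suc k"
    and \<zeta>_other: "\<And>u. u \<noteq> x \<Longrightarrow> u \<noteq> y \<Longrightarrow> \<zeta> u = \<eta> u"
    using True n xy unfolding sigma_def k_def by auto
  define g where "g = (\<lambda>\<theta> u. wN d (\<theta> u) * mstar m u ^ \<theta> u)"
  define P where "P = prod (g \<eta>) (UNIV - {x, y})"
  have w\<eta>: "mu_weight m d \<eta> = g \<eta> x * g \<eta> y * P"
    unfolding P_def mu_weight_def g_def by (rule prod_UNIV_remove2[OF xy])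
  have "prod (g \<zeta>) (UNIV - {x, y}) = P"
    unfolding P_def by (rule prod.cong) (auto simp: g_def \<zeta>_other)
  then have w\<zeta>: "mu_weight m d \<zeta> = g \<zeta> x * g \<zeta> y * P"
    unfolding mu_weight_def g_def using prod_UNIV_remove2[OF xy] by metis
  let ?a = "mstar m x" and ?b = "mstar m y"
  have "g \<eta> x * g \<eta> y * ((real n + 1) * (d + real k) * r x y)
      = (wN d (Suc n) * (real n + 1)) * (?a * r x y) * (?a ^ n * wN d k * ?b ^ k * (d + real k))"
    unfolding g_def n k_def[symmetric] by (simp add: algebra_simps)
  also have "\<dots> = wN d n * (d + real n) * (?b * r y x) * (?a ^ n * wN d k * ?b ^ k * (d + real k))"
    using wN_Suc[OF d, of n] mstar_reversible by simp
  also have "\<dots> = g \<zeta> x * (wN d k * (d + real k) * ?b ^ Suc k) * ((d + real n) * r y x)"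
    unfolding g_def \<zeta>x by (simp add: algebra_simps)
  also have "\<dots> = g \<zeta> x * (wN d (Suc k) * (real k + 1) * ?b ^ Suc k) * ((d + real n) * r y x)"
    using wN_Suc[OF d, of k] by simp
  also have "\<dots> = g \<zeta> x * g \<zeta> y * ((real k + 1) * (d + real n) * r y x)"
    unfolding g_def \<zeta>y by (simp add: algebra_simps)
  finally have "g \<eta> x * g \<eta> y * ((real n + 1) * (d + real k) * r x y) =
      g \<zeta> x * g \<zeta> y * ((real k + 1) * (d + real n) * r y x)" .
  moreover have "edge_rate r d \<eta> \<zeta> x y = (real n + 1) * (d + real k) * r x y"
    using True n unfolding edge_rate_def k_def by simp
  moreover have "edge_rate r d \<zeta> \<eta> y x = (real k + 1) * (d + real n) * r y x"
    using reverse_move \<zeta>x \<zeta>y unfolding edge_rate_def by simp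
  ultimately show ?thesis
    unfolding w\<eta> w\<zeta> by (simp only: ac_simps)
qed

lemma detailed_balance:
  assumes "0 < d"
  shows "mu_weight m d \<eta> * qrate r d \<eta> \<zeta> = mu_weight m d \<zeta> * qrate r d \<zeta> \<eta>"
proof -
  let ?P = "{(x, y). x \<noteq> (y::'a)}"
  have "mu_weight m d \<eta> * qrate r d \<eta> \<zeta> = (\<Sum>(x, y)\<in>?P. mu_weight m d \<eta> * edge_rate r d \<eta> \<zeta> x y)"
    unfolding qrate_eq_sum_edge_rate by (simp add: sum_distrib_left case_prod_beta)
  also have "\<dots> = (\<Sum>(x, y)\<in>?P. mu_weight m d \<zeta> * edge_rate r d \<zeta> \<eta> y x)"
    using edge_detailed_balance[OF assms] by (intro sum.cong) auto
  also have "\<dots> = (\<Sum>(x, y)\<in>?P. mu_weight m d \<zeta> * edge_rate r d \<zeta> \<eta> x y)"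
    by (rule sum.reindex_bij_witness[of _ prod.swap prod.swap]) auto
  also have "\<dots> = mu_weight m d \<zeta> * qrate r d \<zeta> \<eta>"
    unfolding qrate_eq_sum_edge_rate by (simp add: sum_distrib_left case_prod_beta)
  finally show ?thesis .
qed

end

section \<open>Hitting probabilities and the Dirichlet principle\<close>

definition hit_term :: "('a::finite \<Rightarrow> 'a \<Rightarrow> real) \<Rightarrow> real \<Rightarrow> nat \<Rightarrow> 'a config set
    \<Rightarrow> 'a config set \<Rightarrow> 'a config \<Rightarrow> nat \<Rightarrow> real"
  where "hit_term r d N A B \<eta> k = (\<Sum>xs\<in>{xs. length xs = k \<and> set xs \<subseteq> Hn N}.
    (if last (\<eta> # xs) \<in> A \<and> (\<forall>z\<in>set (butlast (\<eta> # xs)). z \<notin> A \<union> B)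
     then prod_list (map (\<lambda>(a, b). jump_prob r d N a b) (zip (\<eta> # xs) xs))
     else 0))"

lemma hit_prob_eq_suminf: "hit_prob r d N A B \<eta> = suminf (hit_term r d N A B \<eta>)"
  unfolding hit_prob_def hit_term_def ..

lemma hit_term_0: "hit_term r d N A B \<eta> 0 = (if \<eta> \<in> A then 1 else 0)"
proof -
  have no_steps: "{xs. length xs = 0 \<and> set xs \<subseteq> Hn N} = {[]}" by auto
  show ?thesis unfolding hit_term_def no_steps by simp
qed

lemma hit_term_Suc: "hit_term r d N A B \<eta> (Suc k) =
  (if \<eta> \<notin> A \<union> B then (\<Sum>\<zeta>\<in>Hn N. jump_prob r d N \<eta> \<zeta> * hit_term r d N A B \<zeta> k) else 0)"
proof -
  let ?L = "{xs. length xs = k \<and> set xs \<subseteq> Hn N}"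
  let ?F = "\<lambda>\<eta> xs. (if last (\<eta> # xs) \<in> A \<and> (\<forall>z\<in>set (butlast (\<eta> # xs)). z \<notin> A \<union> B)
    then prod_list (map (\<lambda>(a, b). jump_prob r d N a b) (zip (\<eta> # xs) xs)) else 0)"
  have paths: "{xs. length xs = Suc k \<and> set xs \<subseteq> Hn N} = (\<lambda>(xs, \<zeta>). \<zeta> # xs) ` (?L \<times> Hn N)"
    using lists_length_Suc_eq[of "Hn N" k] by (simp add: conj_commute)
  have inj: "inj_on (\<lambda>(xs, \<zeta>). \<zeta> # xs) (?L \<times> Hn N)"
    by (auto simp: inj_on_def)
  have "hit_term r d N A B \<eta> (Suc k) = (\<Sum>(xs, \<zeta>)\<in>?L \<times> Hn N. ?F \<eta> (\<zeta> # xs))"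
    unfolding hit_term_def paths sum.reindex[OF inj] comp_def by (rule sum.cong) auto
  also have "\<dots> = (\<Sum>(xs, \<zeta>)\<in>?L \<times> Hn N. if \<eta> \<notin> A \<union> B then jump_prob r d N \<eta> \<zeta> * ?F \<zeta> xs else 0)"
    by (rule sum.cong) auto
  also have "\<dots> = (\<Sum>xs\<in>?L. \<Sum>\<zeta>\<in>Hn N. if \<eta> \<notin> A \<union> B then jump_prob r d N \<eta> \<zeta> * ?F \<zeta> xs else 0)"
    by (rule sum.cartesian_product[symmetric])
  also have "\<dots> = (\<Sum>\<zeta>\<in>Hn N. \<Sum>xs\<in>?L. if \<eta> \<notin> A \<union> B then jump_prob r d N \<eta> \<zeta> * ?F \<zeta> xs else 0)"
    by (rule sum.swap)
  also have "\<dots> = (if \<eta> \<notin> A \<union> B then (\<Sum>\<zeta>\<in>Hn N. jump_prob r d N \<eta> \<zeta> * hit_term r d N A B \<zeta> k) else 0)"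
    unfolding hit_term_def by (simp add: sum_distrib_left)
  finally show ?thesis .
qed

lemma sum_jump_prob_le_1: "(\<Sum>\<zeta>\<in>Hn N. jump_prob r d N \<eta> \<zeta>) \<le> 1"
  unfolding jump_prob_def sum_divide_distrib[symmetric]
  by (cases "(\<Sum>\<zeta>'\<in>Hn N. qrate r d \<eta> \<zeta>') = 0") auto

context
  fixes r :: "'a::finite \<Rightarrow> 'a \<Rightarrow> real" and d :: real and N :: nat and A B :: "'a config set"
  assumes r_nonneg: "\<And>x y. 0 \<le> r x y" and d_pos: "0 < d"
begin

lemma jump_prob_nonneg: "0 \<le> jump_prob r d N \<eta> \<zeta>"
  unfolding jump_prob_def using qrate_nonneg[of r, OF r_nonneg d_pos] by (simp add: sum_nonneg)

lemma hit_term_nonneg: "0 \<le> hit_term r d N A B \<eta> k"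
  by (induction k arbitrary: \<eta>) (simp_all add: hit_term_0 hit_term_Suc sum_nonneg jump_prob_nonneg)

lemma sum_hit_term_le_1: "(\<Sum>k<K. hit_term r d N A B \<eta> k) \<le> 1"
proof (induction K arbitrary: \<eta>)
  case 0
  then show ?case by simp
next
  case (Suc K)
  have "(\<Sum>k<Suc K. hit_term r d N A B \<eta> k) = hit_term r d N A B \<eta> 0 +
      (if \<eta> \<notin> A \<union> B then (\<Sum>\<zeta>\<in>Hn N. jump_prob r d N \<eta> \<zeta> * (\<Sum>k<K. hit_term r d N A B \<zeta> k)) else 0)"
    unfolding sum.lessThan_Suc_shift hit_term_Suc by (auto simp: sum_distrib_left intro: sum.swap)
  moreover have "(\<Sum>\<zeta>\<in>Hn N. jump_prob r d N \<eta> \<zeta> * (\<Sum>k<K. hit_term r d N A B \<zeta> k))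
      \<le> (\<Sum>\<zeta>\<in>Hn N. jump_prob r d N \<eta> \<zeta>)"
    using Suc jump_prob_nonneg by (intro sum_mono mult_left_le) auto
  ultimately show ?case
    using sum_jump_prob_le_1[of r d N \<eta>] by (auto simp: hit_term_0)
qed

lemma summable_hit_term: "summable (hit_term r d N A B \<eta>)"
  by (rule summableI_nonneg_bounded[OF hit_term_nonneg sum_hit_term_le_1])

lemma hit_prob_target: "\<eta> \<in> A \<Longrightarrow> hit_prob r d N A B \<eta> = 1"
proof -
  assume "\<eta> \<in> A"
  then have "hit_term r d N A B \<eta> k = (if k = 0 then 1 else 0)" for k
    by (cases k) (auto simp: hit_term_0 hit_term_Suc)
  then have "hit_term r d N A B \<eta> = (\<lambda>k. if k = 0 then 1 else 0)" ..
  then show ?thesis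
    unfolding hit_prob_eq_suminf using sums_single[of 0 "\<lambda>_. 1::real"] sums_unique by metis
qed

lemma hit_prob_avoided: "\<eta> \<in> B \<Longrightarrow> \<eta> \<notin> A \<Longrightarrow> hit_prob r d N A B \<eta> = 0"
proof -
  assume "\<eta> \<in> B" "\<eta> \<notin> A"
  then have "hit_term r d N A B \<eta> k = 0" for k
    by (cases k) (auto simp: hit_term_0 hit_term_Suc)
  then have "hit_term r d N A B \<eta> = (\<lambda>k. 0)" ..
  then show ?thesis unfolding hit_prob_eq_suminf by simp
qed

lemma hit_prob_harmonic:
  assumes "\<eta> \<notin> A \<union> B"
  shows "hit_prob r d N A B \<eta> = (\<Sum>\<zeta>\<in>Hn N. jump_prob r d N \<eta> \<zeta> * hit_prob r d N A B \<zeta>)"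
proof -
  have "hit_prob r d N A B \<eta> = (\<Sum>k. hit_term r d N A B \<eta> (Suc k)) + hit_term r d N A B \<eta> 0"
    unfolding hit_prob_eq_suminf using suminf_split_head[OF summable_hit_term] by simp
  also have "\<dots> = (\<Sum>k. \<Sum>\<zeta>\<in>Hn N. jump_prob r d N \<eta> \<zeta> * hit_term r d N A B \<zeta> k)"
    using assms by (simp add: hit_term_0 hit_term_Suc)
  also have "\<dots> = (\<Sum>\<zeta>\<in>Hn N. \<Sum>k. jump_prob r d N \<eta> \<zeta> * hit_term r d N A B \<zeta> k)"
    by (rule suminf_sum) (intro summable_mult summable_hit_term)
  also have "\<dots> = (\<Sum>\<zeta>\<in>Hn N. jump_prob r d N \<eta> \<zeta> * hit_prob r d N A B \<zeta>)"
    unfolding hit_prob_eq_suminf by (intro sum.cong refl suminf_mult summable_hit_term)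
  finally show ?thesis .
qed

lemma hit_prob_harmonic_qrate:
  assumes "\<eta> \<notin> A \<union> B"
  shows "(\<Sum>\<zeta>\<in>Hn N. qrate r d \<eta> \<zeta> * (hit_prob r d N A B \<zeta> - hit_prob r d N A B \<eta>)) = 0"
proof -
  let ?Q = "\<Sum>\<zeta>\<in>Hn N. qrate r d \<eta> \<zeta>"
  let ?h = "hit_prob r d N A B"
  show ?thesis
  proof (cases "?Q = 0")
    case True
    then have "\<forall>\<zeta>\<in>Hn N. qrate r d \<eta> \<zeta> = 0"
      using sum_nonneg_eq_0_iff[OF finite_Hn] qrate_nonneg[of r, OF r_nonneg d_pos] by blast
    then show ?thesis by simp
  next
    case False
    have "(\<Sum>\<zeta>\<in>Hn N. qrate r d \<eta> \<zeta> * ?h \<zeta>) = ?Q * ?h \<eta>"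
      using hit_prob_harmonic[OF assms] False
      unfolding jump_prob_def by (simp add: sum_divide_distrib[symmetric] field_simps)
    then show ?thesis
      by (simp add: sum_subtractf sum_distrib_right right_diff_distrib)
  qed
qed

end

context reversible_walk
begin

lemma hit_prob_energy_orthogonal:
  assumes d: "0 < d" and g: "\<And>\<eta>. \<eta> \<in> Hn N \<Longrightarrow> \<eta> \<in> A \<union> B \<Longrightarrow> g \<eta> = 0"
  defines "h \<equiv> hit_prob r d N A B" and "c \<equiv> \<lambda>\<eta> \<zeta>. mu_weight m d \<eta> * qrate r d \<eta> \<zeta>"
  shows "(\<Sum>\<eta>\<in>Hn N. \<Sum>\<zeta>\<in>Hn N. c \<eta> \<zeta> * (h \<zeta> - h \<eta>) * (g \<zeta> - g \<eta>)) = 0"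
proof -
  have c_sym: "c \<eta> \<zeta> = c \<zeta> \<eta>" for \<eta> \<zeta>
    unfolding c_def by (rule detailed_balance[OF d])
  have swap: "(\<Sum>\<eta>\<in>Hn N. \<Sum>\<zeta>\<in>Hn N. c \<eta> \<zeta> * (h \<zeta> - h \<eta>) * g \<zeta>) =
      (\<Sum>\<eta>\<in>Hn N. \<Sum>\<zeta>\<in>Hn N. - (c \<eta> \<zeta> * (h \<zeta> - h \<eta>) * g \<eta>))"
    by (subst sum.swap) (auto intro!: sum.cong simp: c_sym algebra_simps)
  have harmonic: "(\<Sum>\<zeta>\<in>Hn N. c \<eta> \<zeta> * (h \<zeta> - h \<eta>) * g \<eta>) = 0" if "\<eta> \<in> Hn N" for \<eta>
  proof (cases "\<eta> \<in> A \<union> B")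
    case True
    then show ?thesis using g[OF that] by simp
  next
    case False
    have "(\<Sum>\<zeta>\<in>Hn N. c \<eta> \<zeta> * (h \<zeta> - h \<eta>) * g \<eta>) =
        mu_weight m d \<eta> * g \<eta> * (\<Sum>\<zeta>\<in>Hn N. qrate r d \<eta> \<zeta> * (h \<zeta> - h \<eta>))"
      unfolding c_def by (simp add: sum_distrib_left algebra_simps)
    then show ?thesis
      using hit_prob_harmonic_qrate[OF r_nonneg d False] unfolding h_def by simp
  qed
  have "(\<Sum>\<eta>\<in>Hn N. \<Sum>\<zeta>\<in>Hn N. c \<eta> \<zeta> * (h \<zeta> - h \<eta>) * (g \<zeta> - g \<eta>)) =
      (\<Sum>\<eta>\<in>Hn N. \<Sum>\<zeta>\<in>Hn N. c \<eta> \<zeta> * (h \<zeta> - h \<eta>) * g \<zeta>) -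
      (\<Sum>\<eta>\<in>Hn N. \<Sum>\<zeta>\<in>Hn N. c \<eta> \<zeta> * (h \<zeta> - h \<eta>) * g \<eta>)"
    by (simp add: sum_subtractf[symmetric] algebra_simps)
  also have "\<dots> = 0"
    unfolding swap using harmonic by (simp add: sum_negf)
  finally show ?thesis .
qed

lemma dirichlet_principle:
  assumes d: "0 < d" and f: "\<And>\<eta>. \<eta> \<in> Hn N \<Longrightarrow> \<eta> \<in> A \<union> B \<Longrightarrow> f \<eta> = hit_prob r d N A B \<eta>"
  shows "energy r m d N (hit_prob r d N A B) \<le> energy r m d N f"
proof -
  let ?h = "hit_prob r d N A B"
  define g where "g = (\<lambda>\<eta>. f \<eta> - ?h \<eta>)"
  define c where "c = (\<lambda>\<eta> \<zeta>. mu_weight m d \<eta> * qrate r d \<eta> \<zeta>)"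
  let ?cross = "\<Sum>\<eta>\<in>Hn N. \<Sum>\<zeta>\<in>Hn N. c \<eta> \<zeta> * (?h \<zeta> - ?h \<eta>) * (g \<zeta> - g \<eta>)"
  have "energy r m d N f = (\<Sum>\<eta>\<in>Hn N. \<Sum>\<zeta>\<in>Hn N. c \<eta> \<zeta> * (?h \<zeta> - ?h \<eta>)\<^sup>2
      + 2 * (c \<eta> \<zeta> * (?h \<zeta> - ?h \<eta>) * (g \<zeta> - g \<eta>)) + c \<eta> \<zeta> * (g \<zeta> - g \<eta>)\<^sup>2)"
    unfolding energy_def c_def g_def by (intro sum.cong refl) (simp add: power2_eq_square algebra_simps)
  also have "\<dots> = energy r m d N ?h + 2 * ?cross + (\<Sum>\<eta>\<in>Hn N. \<Sum>\<zeta>\<in>Hn N. c \<eta> \<zeta> * (g \<zeta> - g \<eta>)\<^sup>2)"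
    unfolding energy_def c_def by (simp add: sum.distrib sum_distrib_left)
  also have "?cross = 0"
    unfolding c_def by (rule hit_prob_energy_orthogonal[OF d]) (simp add: g_def f)
  also have "energy r m d N ?h + 2 * 0 + (\<Sum>\<eta>\<in>Hn N. \<Sum>\<zeta>\<in>Hn N. c \<eta> \<zeta> * (g \<zeta> - g \<eta>)\<^sup>2)
      \<ge> energy r m d N ?h"
    unfolding c_def using mu_weight_nonneg[OF d] qrate_nonneg[of r, OF r_nonneg d]
    by (simp add: sum_nonneg)
  finally show ?thesis .
qed

end

section \<open>Upper bound: the occupation of a class\<close>

context
  fixes d :: real and N :: nat
  assumes d_pos: "0 < d" and d_le_1: "d \<le> 1" and d_harm: "d * harm N \<le> 1"
begin

lemma wN_times_index_le:
  assumes "1 \<le> k" "k \<le> N"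
  shows "wN d k * real k \<le> exp 1 * d"
proof -
  have "d * harm (k - 1) \<le> d * harm N"
    using assms d_pos by (intro mult_left_mono harm_mono) auto
  then have "exp (d * harm (k - 1)) \<le> exp 1"
    using d_harm by simp
  then have "d * exp (d * harm (k - 1)) \<le> d * exp 1"
    using d_pos by simp
  then show ?thesis
    using wN_times_index_bounds[OF d_pos assms(1)] by (simp add: mult.commute)
qed

lemma wN_le:
  assumes "1 \<le> k" "k \<le> N"
  shows "wN d k \<le> exp 1 * d / real k"
  using wN_times_index_le[OF assms] assms(1) by (simp add: pos_le_divide_eq)

lemma wN_times_shift_le:
  assumes "k \<le> N"
  shows "wN d k * (d + real k) \<le> 2 * exp 1 * d"
proof (cases "k = 0")
  case True
  then show ?thesis
    using wN_0[OF d_pos] d_pos exp_ge_add_one_self[of "1::real"] by simp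
next
  case False
  then have "1 \<le> k" by simp
  have "d * wN d k \<le> 1 * wN d k"
    using d_le_1 wN_pos[OF d_pos, of k] by (intro mult_right_mono) auto
  also have "\<dots> \<le> wN d k * real k"
    using \<open>1 \<le> k\<close> wN_pos[OF d_pos, of k] by simp
  finally have "d * wN d k \<le> exp 1 * d"
    using wN_times_index_le[OF \<open>1 \<le> k\<close> assms] by linarith
  then show ?thesis
    using wN_times_index_le[OF \<open>1 \<le> k\<close> assms] by (simp add: algebra_simps)
qed

lemma sum_wN_power_le:
  assumes "0 \<le> a" "a \<le> 1"
  shows "(\<Sum>k\<le>N. wN d k * a ^ k) \<le> 1 + exp 1"
proof -
  have "(\<Sum>i<N. wN d (Suc i) * a ^ Suc i) \<le> (\<Sum>i<N. exp 1 * d * inverse (real (Suc i)))"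
  proof (rule sum_mono)
    fix i assume "i \<in> {..<N}"
    then have "wN d (Suc i) \<le> exp 1 * d / real (Suc i)"
      by (intro wN_le) auto
    moreover have "wN d (Suc i) * a ^ Suc i \<le> wN d (Suc i)"
      using assms wN_pos[OF d_pos] by (intro mult_left_le power_le_one) (auto simp: less_imp_le)
    ultimately show "wN d (Suc i) * a ^ Suc i \<le> exp 1 * d * inverse (real (Suc i))"
      by (simp add: divide_inverse)
  qed
  also have "\<dots> = exp 1 * (d * harm N)"
    by (simp add: harm_altdef sum_distrib_left mult.assoc)
  also have "\<dots> \<le> exp 1"
    using d_harm by simp
  finally show ?thesis
    using wN_0[OF d_pos] by (simp add: sum.atMost_shift)
qed

lemma sum_wN_power_shift_le:
  assumes "0 \<le> a" "a < 1"
  shows "(\<Sum>k\<le>N. wN d k * a ^ k * (d + real k)) \<le> 2 * exp 1 * d / (1 - a)"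
proof -
  have "(\<Sum>k\<le>N. wN d k * a ^ k * (d + real k)) \<le> (\<Sum>k\<le>N. 2 * exp 1 * d * a ^ k)"
  proof (rule sum_mono)
    fix k assume "k \<in> {..N}"
    then have "wN d k * (d + real k) * a ^ k \<le> 2 * exp 1 * d * a ^ k"
      using assms by (intro mult_right_mono wN_times_shift_le) auto
    then show "wN d k * a ^ k * (d + real k) \<le> 2 * exp 1 * d * a ^ k"
      by (simp add: ac_simps)
  qed
  also have "\<dots> = 2 * exp 1 * d * (\<Sum>k<Suc N. a ^ k)"
    by (simp add: sum_distrib_left lessThan_Suc_atMost)
  also have "\<dots> = 2 * exp 1 * d * ((1 - a ^ Suc N) / (1 - a))"
    using assms by (simp only: sum_gp_strict) simp
  also have "\<dots> \<le> 2 * exp 1 * d * (1 / (1 - a))"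
    using assms d_pos by (intro mult_left_mono divide_right_mono) auto
  finally show ?thesis by simp
qed

end

definition occupation :: "'a set \<Rightarrow> nat \<Rightarrow> 'a config \<Rightarrow> real"
  where "occupation C N \<eta> = (\<Sum>u\<in>C. real (\<eta> u)) / real N"

lemma occupation_sigma:
  fixes C :: "'a::finite set"
  assumes "x \<noteq> y" "1 \<le> \<eta> x"
  shows "occupation C N (sigma x y \<eta>) - occupation C N \<eta> = (of_bool (y \<in> C) - of_bool (x \<in> C)) / real N"
proof -
  have "real (sigma x y \<eta> u) = real (\<eta> u) - of_bool (u = x) + of_bool (u = y)" for u
    using assms unfolding sigma_def by auto
  then have "(\<Sum>u\<in>C. real (sigma x y \<eta> u)) = (\<Sum>u\<in>C. real (\<eta> u)) - of_bool (x \<in> C) + of_bool (y \<in> C)"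
    by (simp add: sum.distrib sum_subtractf)
  then show ?thesis
    unfolding occupation_def by (simp add: diff_divide_distrib add_divide_distrib)
qed

text \<open>For \<open>x \<in> S_star\<close> the summand \<open>1 / (1 - mstar m x)\<close> is a division by zero, hence \<open>0\<close>:
  only edges with an endpoint off \<open>S_star\<close> contribute.\<close>
definition escape_const :: "('a::finite \<Rightarrow> 'a \<Rightarrow> real) \<Rightarrow> ('a \<Rightarrow> real) \<Rightarrow> real"
  where "escape_const r m = 4 * exp 1 ^ 2 * (1 + exp 1) ^ CARD('a) *
    (\<Sum>(x, y)\<in>{(x, y). x \<noteq> y}. r x y * (1 / (1 - mstar m x) + 1 / (1 - mstar m y)))"

context reversible_walk
begin

lemma prod_sum_wN_power_le:
  assumes "0 < d" "d \<le> 1" "d * harm N \<le> 1"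
  shows "(\<Prod>u\<in>U. \<Sum>k\<le>N. wN d k * mstar m u ^ k) \<le> (1 + exp 1) ^ CARD('a)"
proof -
  have "(\<Prod>u\<in>U. \<Sum>k\<le>N. wN d k * mstar m u ^ k) \<le> (\<Prod>u\<in>U. 1 + exp 1)"
    using sum_wN_power_le[OF assms mstar_nonneg mstar_le_1] wN_pos[OF assms(1)] mstar_nonneg
    by (intro prod_mono conjI sum_nonneg mult_nonneg_nonneg zero_le_power) (auto intro: less_imp_le)
  also have "\<dots> \<le> (1 + exp 1) ^ CARD('a)"
    by (simp add: card_mono power_increasing)
  finally show ?thesis .
qed

lemma sum_mu_weight_two_sites_le:
  assumes d_pos: "0 < d" and d_le_1: "d \<le> 1" and d_harm: "d * harm N \<le> 1"
    and st: "s \<noteq> t" and s: "s \<notin> Sstar m"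
  shows "(\<Sum>\<eta>\<in>Hn N. mu_weight m d \<eta> * (d + real (\<eta> s)) * (d + real (\<eta> t)))
    \<le> 4 * exp 1 ^ 2 * (1 + exp 1) ^ CARD('a) / (1 - mstar m s) * d\<^sup>2"
proof -
  have ms: "mstar m s < 1"
    using s mstar_le_1[of s] mstar_eq_1_iff[of s] by linarith
  define F where "F = (\<lambda>u k. wN d k * mstar m u ^ k *
    (if u = s then d + real k else 1) * (if u = t then d + real k else 1))"
  let ?U = "UNIV - {t} - {s}"
  have prod_F: "(\<Prod>u\<in>UNIV. F u (\<eta> u)) = mu_weight m d \<eta> * (d + real (\<eta> s)) * (d + real (\<eta> t))"
    for \<eta> :: "'a config"
    unfolding F_def mu_weight_def prod.distrib by (simp add: prod.delta)
  have F_nonneg: "0 \<le> F u k" for u k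
    unfolding F_def using wN_pos[OF d_pos, of k] mstar_nonneg[of u] d_pos by auto
  have "F t k \<le> 2 * exp 1 * d" if "k \<le> N" for k
  proof -
    have "F t k = wN d k * (d + real k) * mstar m t ^ k"
      unfolding F_def using st by simp
    also have "\<dots> \<le> wN d k * (d + real k)"
      using wN_pos[OF d_pos, of k] d_pos mstar_nonneg[of t] mstar_le_1[of t]
      by (intro mult_left_le power_le_one) auto
    finally show ?thesis
      using wN_times_shift_le[OF d_pos d_le_1 d_harm that] by linarith
  qed
  then have "(\<Sum>\<eta>\<in>Hn N. \<Prod>u\<in>UNIV. F u (\<eta> u)) \<le> 2 * exp 1 * d * (\<Prod>u\<in>UNIV - {t}. \<Sum>k\<le>N. F u k)"
    by (rule sum_Hn_prod_le[OF F_nonneg])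
  also have "(\<Prod>u\<in>UNIV - {t}. \<Sum>k\<le>N. F u k) = (\<Sum>k\<le>N. F s k) * (\<Prod>u\<in>?U. \<Sum>k\<le>N. wN d k * mstar m u ^ k)"
    using st by (subst prod.remove[of _ s]) (auto simp: F_def intro!: prod.cong)
  also have "\<dots> \<le> (2 * exp 1 * d / (1 - mstar m s)) * (1 + exp 1) ^ CARD('a)"
  proof (rule mult_mono)
    show "(\<Sum>k\<le>N. F s k) \<le> 2 * exp 1 * d / (1 - mstar m s)"
      unfolding F_def using st sum_wN_power_shift_le[OF d_pos d_le_1 d_harm mstar_nonneg ms] by simp
    show "0 \<le> (\<Prod>u\<in>?U. \<Sum>k\<le>N. wN d k * mstar m u ^ k)"
      using wN_pos[OF d_pos] mstar_nonneg
      by (intro prod_nonneg sum_nonneg mult_nonneg_nonneg zero_le_power) (auto intro: less_imp_le)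
  qed (use prod_sum_wN_power_le[OF d_pos d_le_1 d_harm] d_pos ms in auto)
  finally show ?thesis
    unfolding prod_F using d_pos by (simp add: mult_left_mono power2_eq_square field_simps)
qed

lemma sum_mu_weight_edge_le:
  assumes "0 < d" "d \<le> 1" "d * harm N \<le> 1" and st: "s \<noteq> t" and off: "s \<notin> Sstar m \<or> t \<notin> Sstar m"
  shows "(\<Sum>\<eta>\<in>Hn N. mu_weight m d \<eta> * (d + real (\<eta> s)) * (d + real (\<eta> t)))
    \<le> 4 * exp 1 ^ 2 * (1 + exp 1) ^ CARD('a) * (1 / (1 - mstar m s) + 1 / (1 - mstar m t)) * d\<^sup>2"
    (is "?S \<le> ?c * (?ks + ?kt) * d\<^sup>2")
proof -
  have "0 \<le> ?ks" "0 \<le> ?kt"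
    using mstar_le_1[of s] mstar_le_1[of t] by simp_all
  moreover have "?S \<le> ?c * ?ks * d\<^sup>2 \<or> ?S \<le> ?c * ?kt * d\<^sup>2"
    using off sum_mu_weight_two_sites_le[OF assms(1-3) st] sum_mu_weight_two_sites_le[OF assms(1-3) st[symmetric]]
    by (auto simp: ac_simps)
  moreover have "?c * ?ks * d\<^sup>2 \<le> ?c * (?ks + ?kt) * d\<^sup>2" "?c * ?kt * d\<^sup>2 \<le> ?c * (?ks + ?kt) * d\<^sup>2"
    using calculation(1,2) by (intro mult_right_mono mult_left_mono; simp)+
  ultimately show ?thesis
    by linarith
qed

lemma occupation_edge_term_le:
  assumes d_pos: "0 < d" and xy: "x \<noteq> y"
  shows "(\<Sum>\<zeta>\<in>Hn N. mu_weight m d \<eta> * edge_rate r d \<eta> \<zeta> x y * (occupation C N \<zeta> - occupation C N \<eta>)\<^sup>2)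
    \<le> (if (x \<in> C) \<noteq> (y \<in> C)
        then r x y * mu_weight m d \<eta> * (d + real (\<eta> x)) * (d + real (\<eta> y)) / (real N)\<^sup>2 else 0)"
proof -
  let ?f = "occupation C N"
  define T where "T = (if 1 \<le> \<eta> x
    then mu_weight m d \<eta> * (real (\<eta> x) * (d + real (\<eta> y)) * r x y) * (?f (sigma x y \<eta>) - ?f \<eta>)\<^sup>2 else 0)"
  have w: "0 \<le> mu_weight m d \<eta>"
    by (rule mu_weight_nonneg[OF d_pos])
  have "(\<Sum>\<zeta>\<in>Hn N. mu_weight m d \<eta> * edge_rate r d \<eta> \<zeta> x y * (?f \<zeta> - ?f \<eta>)\<^sup>2)
      = (\<Sum>\<zeta>\<in>Hn N. if \<zeta> = sigma x y \<eta> then T else 0)"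
    unfolding edge_rate_def T_def by (intro sum.cong refl) auto
  also have "\<dots> \<le> T"
    using w r_nonneg[of x y] d_pos unfolding T_def by (auto simp: finite_Hn)
  also have "T \<le> (if (x \<in> C) \<noteq> (y \<in> C)
      then r x y * mu_weight m d \<eta> * (d + real (\<eta> x)) * (d + real (\<eta> y)) / (real N)\<^sup>2 else 0)"
  proof (cases "1 \<le> \<eta> x \<and> (x \<in> C) \<noteq> (y \<in> C)")
    case False
    then show ?thesis
      unfolding T_def using occupation_sigma[OF xy, of \<eta> C N] w r_nonneg[of x y] d_pos by auto
  next
    case True
    then have "(?f (sigma x y \<eta>) - ?f \<eta>)\<^sup>2 = 1 / (real N)\<^sup>2"
      using occupation_sigma[OF xy, of \<eta> C N] by (auto simp: power_divide)
    moreover have "real (\<eta> x) * (r x y * mu_weight m d \<eta> * (d + real (\<eta> y)))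
        \<le> (d + real (\<eta> x)) * (r x y * mu_weight m d \<eta> * (d + real (\<eta> y)))"
      using w r_nonneg[of x y] d_pos by (intro mult_right_mono) auto
    ultimately show ?thesis
      unfolding T_def using True by (simp add: divide_right_mono ac_simps)
  qed
  finally show ?thesis .
qed

lemma occupation_edge_energy_le:
  assumes d_pos: "0 < d" and d_le_1: "d \<le> 1" and d_harm: "d * harm N \<le> 1" and xy: "x \<noteq> y"
    and boundary: "0 < r x y \<Longrightarrow> (x \<in> C) \<noteq> (y \<in> C) \<Longrightarrow> x \<notin> Sstar m \<or> y \<notin> Sstar m"
  shows "(\<Sum>\<eta>\<in>Hn N. \<Sum>\<zeta>\<in>Hn N. mu_weight m d \<eta> * edge_rate r d \<eta> \<zeta> x y *
      (occupation C N \<zeta> - occupation C N \<eta>)\<^sup>2)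
    \<le> 4 * exp 1 ^ 2 * (1 + exp 1) ^ CARD('a) *
      (r x y * (1 / (1 - mstar m x) + 1 / (1 - mstar m y))) * d\<^sup>2 / (real N)\<^sup>2"
    (is "?E \<le> ?c * (r x y * ?k) * d\<^sup>2 / (real N)\<^sup>2")
proof -
  let ?S = "\<Sum>\<eta>\<in>Hn N. mu_weight m d \<eta> * (d + real (\<eta> x)) * (d + real (\<eta> y))"
  have "0 \<le> ?k"
    using mstar_le_1[of x] mstar_le_1[of y] by simp
  have "?E \<le> (\<Sum>\<eta>\<in>Hn N. if (x \<in> C) \<noteq> (y \<in> C)
      then r x y * mu_weight m d \<eta> * (d + real (\<eta> x)) * (d + real (\<eta> y)) / (real N)\<^sup>2 else 0)"
    by (intro sum_mono occupation_edge_term_le[OF d_pos xy])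
  also have "\<dots> = (if (x \<in> C) \<noteq> (y \<in> C) then r x y / (real N)\<^sup>2 * ?S else 0)"
    by (simp add: sum_distrib_left ac_simps)
  also have "\<dots> \<le> ?c * (r x y * ?k) * d\<^sup>2 / (real N)\<^sup>2"
  proof (cases "0 < r x y \<and> (x \<in> C) \<noteq> (y \<in> C)")
    case False
    then have "r x y = 0 \<or> (x \<in> C) = (y \<in> C)"
      using r_nonneg[of x y] by linarith
    then show ?thesis
      using r_nonneg[of x y] \<open>0 \<le> ?k\<close> by auto
  next
    case True
    then have "r x y / (real N)\<^sup>2 * ?S \<le> r x y / (real N)\<^sup>2 * (?c * ?k * d\<^sup>2)"
      using sum_mu_weight_edge_le[OF d_pos d_le_1 d_harm xy boundary] by (intro mult_left_mono) auto
    then show ?thesis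
      using True by (simp add: ac_simps)
  qed
  finally show ?thesis .
qed

lemma energy_occupation_le:
  assumes d_pos: "0 < d" and d_le_1: "d \<le> 1" and d_harm: "d * harm N \<le> 1"
    and boundary: "\<And>x y. 0 < r x y \<Longrightarrow> (x \<in> C) \<noteq> (y \<in> C) \<Longrightarrow> x \<notin> Sstar m \<or> y \<notin> Sstar m"
  shows "energy r m d N (occupation C N) \<le> escape_const r m * d\<^sup>2 / (real N)\<^sup>2"
proof -
  let ?P = "{(x, y). x \<noteq> (y::'a)}" and ?f = "occupation C N"
  have "energy r m d N ?f = (\<Sum>\<eta>\<in>Hn N. \<Sum>\<zeta>\<in>Hn N. \<Sum>(x, y)\<in>?P.
      mu_weight m d \<eta> * edge_rate r d \<eta> \<zeta> x y * (?f \<zeta> - ?f \<eta>)\<^sup>2)"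
    unfolding energy_def qrate_eq_sum_edge_rate by (simp add: sum_distrib_left sum_distrib_right case_prod_unfold)
  also have "\<dots> = (\<Sum>(x, y)\<in>?P. \<Sum>\<eta>\<in>Hn N. \<Sum>\<zeta>\<in>Hn N.
      mu_weight m d \<eta> * edge_rate r d \<eta> \<zeta> x y * (?f \<zeta> - ?f \<eta>)\<^sup>2)"
    by (subst sum.swap, subst (2) sum.swap) (simp add: case_prod_unfold)
  also have "\<dots> \<le> (\<Sum>(x, y)\<in>?P. 4 * exp 1 ^ 2 * (1 + exp 1) ^ CARD('a) *
      (r x y * (1 / (1 - mstar m x) + 1 / (1 - mstar m y))) * d\<^sup>2 / (real N)\<^sup>2)"
    using occupation_edge_energy_le[OF d_pos d_le_1 d_harm _ boundary] by (intro sum_mono) auto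
  also have "\<dots> = escape_const r m * d\<^sup>2 / (real N)\<^sup>2"
    unfolding escape_const_def by (simp add: sum_divide_distrib sum_distrib_left sum_distrib_right case_prod_unfold)
  finally show ?thesis .
qed

end

section \<open>Lower bound: paths inside a class\<close>

lemma power2_diff_le_triangle:
  fixes a b c :: real
  shows "(a - c)\<^sup>2 \<le> 2 * (a - b)\<^sup>2 + 2 * (b - c)\<^sup>2"
proof -
  have "0 \<le> ((a - b) - (b - c))\<^sup>2" by simp
  then show ?thesis by (simp add: power2_eq_square algebra_simps)
qed

lemma ex_bound_finite_uniform:
  fixes P :: "'b \<Rightarrow> real \<Rightarrow> bool"
  assumes "finite C" and "\<And>x. x \<in> C \<Longrightarrow> \<exists>K. P x K" and "\<And>x K K'. P x K \<Longrightarrow> K \<le> K' \<Longrightarrow> P x K'"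
  shows "\<exists>K. \<forall>x\<in>C. P x K"
  using assms(1,2)
proof (induction C rule: finite_induct)
  case (insert x C)
  then obtain K1 K2 where "\<forall>y\<in>C. P y K1" and "P x K2"
    by blast
  then show ?case
    using assms(3) by (metis insert_iff max.cobounded1 max.cobounded2)
qed simp

context reversible_walk
begin

lemma mu_weight_split_config:
  assumes "0 < d" "b \<noteq> c" "mstar m b = 1" "mstar m c = 1"
  shows "mu_weight m d (split_config N b c k) = wN d (N - k) * wN d k"
proof -
  let ?\<eta> = "split_config N b c k"
  have "mu_weight m d ?\<eta> = (wN d (?\<eta> b) * mstar m b ^ ?\<eta> b) * (wN d (?\<eta> c) * mstar m c ^ ?\<eta> c)
      * (\<Prod>u\<in>UNIV - {b, c}. wN d (?\<eta> u) * mstar m u ^ ?\<eta> u)"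
    unfolding mu_weight_def by (rule prod_UNIV_remove2[OF assms(2)])
  also have "(\<Prod>u\<in>UNIV - {b, c}. wN d (?\<eta> u) * mstar m u ^ ?\<eta> u) = 1"
    by (rule prod.neutral) (auto simp: split_config_def wN_0[OF assms(1)])
  finally show ?thesis
    using assms by (simp add: split_config_def)
qed

lemma split_config_conductance_ge:
  assumes d_pos: "0 < d" and bc: "b \<noteq> c" and b: "mstar m b = 1" and c: "mstar m c = 1" and k: "k < N"
  shows "d\<^sup>2 * r b c \<le> mu_weight m d (split_config N b c k) * qrate r d (split_config N b c k) (split_config N b c (Suc k))"
proof -
  let ?\<eta> = "split_config N b c"
  have "(\<lambda>(x, y). edge_rate r d (?\<eta> k) (?\<eta> (Suc k)) x y) (b, c)
      \<le> (\<Sum>(x, y)\<in>{(x, y). x \<noteq> y}. edge_rate r d (?\<eta> k) (?\<eta> (Suc k)) x y)"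
    using bc edge_rate_nonneg[of r, OF r_nonneg d_pos] by (intro member_le_sum) auto
  then have "edge_rate r d (?\<eta> k) (?\<eta> (Suc k)) b c \<le> qrate r d (?\<eta> k) (?\<eta> (Suc k))"
    unfolding qrate_eq_sum_edge_rate by simp
  moreover have "edge_rate r d (?\<eta> k) (?\<eta> (Suc k)) b c = real (N - k) * (d + real k) * r b c"
    unfolding edge_rate_def using sigma_split_config[OF bc k] k bc by (auto simp: split_config_def)
  ultimately have q: "real (N - k) * (d + real k) * r b c \<le> qrate r d (?\<eta> k) (?\<eta> (Suc k))"
    by simp
  have first: "d \<le> wN d (N - k) * real (N - k)"
    using wN_times_index_bounds[OF d_pos, of "N - k"] k by auto
  have "d * d \<le> (wN d (N - k) * real (N - k)) * (wN d k * (d + real k))"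
    by (rule mult_mono[OF first wN_times_shift_ge[OF d_pos]]) (use first d_pos in linarith)+
  then have "d * d * r b c \<le> (wN d (N - k) * real (N - k)) * (wN d k * (d + real k)) * r b c"
    using r_nonneg[of b c] by (rule mult_right_mono)
  then have "d\<^sup>2 * r b c \<le> mu_weight m d (?\<eta> k) * (real (N - k) * (d + real k) * r b c)"
    unfolding mu_weight_split_config[OF d_pos bc b c] power2_eq_square by (simp only: ac_simps)
  also have "\<dots> \<le> mu_weight m d (?\<eta> k) * qrate r d (?\<eta> k) (?\<eta> (Suc k))"
    by (rule mult_left_mono[OF q mu_weight_nonneg[OF d_pos]])
  finally show ?thesis .
qed

lemma energy_ge_star_edge:
  assumes d_pos: "0 < d" and bc: "b \<noteq> c" and b: "mstar m b = 1" and c: "mstar m c = 1"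
    and r_pos: "0 < r b c"
  shows "(g (xi N c) - g (xi N b))\<^sup>2 \<le> real N / (d\<^sup>2 * r b c) * energy r m d N g"
proof -
  let ?\<eta> = "split_config N b c"
  define D where "D = (\<lambda>k. g (?\<eta> (Suc k)) - g (?\<eta> k))"
  let ?F = "\<lambda>(\<eta>, \<zeta>). mu_weight m d \<eta> * qrate r d \<eta> \<zeta> * (g \<zeta> - g \<eta>)\<^sup>2"
  have "inj_on (\<lambda>k. (?\<eta> k, ?\<eta> (Suc k))) {..<N}"
  proof (rule inj_onI)
    fix i j assume "(?\<eta> i, ?\<eta> (Suc i)) = (?\<eta> j, ?\<eta> (Suc j))"
    then have "?\<eta> i c = ?\<eta> j c" by simp
    then show "i = j" using bc by (simp add: split_config_def)
  qed
  moreover have "(\<lambda>k. (?\<eta> k, ?\<eta> (Suc k))) ` {..<N} \<subseteq> Hn N \<times> Hn N"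
    by (auto intro: split_config_in_Hn)
  moreover have "0 \<le> ?F p" for p
    using mu_weight_nonneg[OF d_pos] qrate_nonneg[of r, OF r_nonneg d_pos] by (auto simp: case_prod_unfold)
  ultimately have "(\<Sum>k<N. ?F (?\<eta> k, ?\<eta> (Suc k))) \<le> (\<Sum>p\<in>Hn N \<times> Hn N. ?F p)"
    by (subst sum.reindex[symmetric, unfolded comp_def]) (auto intro!: sum_mono2 simp: finite_Hn)
  also have "\<dots> = energy r m d N g"
    unfolding energy_def by (simp add: sum.cartesian_product)
  finally have along_segment: "(\<Sum>k<N. ?F (?\<eta> k, ?\<eta> (Suc k))) \<le> energy r m d N g" .
  have "d\<^sup>2 * r b c * (\<Sum>k<N. (D k)\<^sup>2) \<le> (\<Sum>k<N. ?F (?\<eta> k, ?\<eta> (Suc k)))"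
    unfolding sum_distrib_left D_def
    by (intro sum_mono) (auto intro!: mult_right_mono split_config_conductance_ge[OF d_pos bc b c])
  then have chain: "d\<^sup>2 * r b c * (\<Sum>k<N. (D k)\<^sup>2) \<le> energy r m d N g"
    using along_segment by linarith
  have "(g (xi N c) - g (xi N b))\<^sup>2 = (\<Sum>k<N. D k)\<^sup>2"
    unfolding D_def using sum_lessThan_telescope[of "\<lambda>k. g (?\<eta> k)" N]
    by (simp add: split_config_0[OF bc] split_config_all[OF bc])
  also have "\<dots> \<le> real N * (\<Sum>k<N. (D k)\<^sup>2)"
    using Cauchy_Schwarz_ineq_sum[of "\<lambda>_. 1::real" D "{..<N}"] by simp
  also have "\<dots> \<le> real N * (energy r m d N g / (d\<^sup>2 * r b c))"
    using chain d_pos r_pos by (intro mult_left_mono) (auto simp: field_simps)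
  finally show ?thesis
    by simp
qed

lemma energy_ge_star_path:
  assumes d_pos: "\<And>N. 0 < d N" and path: "(x0, x) \<in> (star_edges r m)\<^sup>*"
  shows "\<exists>K. \<forall>N g. (g (xi N x) - g (xi N x0))\<^sup>2 \<le> K * (real N / (d N)\<^sup>2 * energy r m (d N) N g)"
  using path
proof (induction rule: rtrancl_induct)
  case base
  show ?case
    by (rule exI[of _ 0]) simp
next
  case (step y z)
  then obtain K where K: "\<And>N g. (g (xi N y) - g (xi N x0))\<^sup>2 \<le> K * (real N / (d N)\<^sup>2 * energy r m (d N) N g)"
    by blast
  have y: "mstar m y = 1" and z: "mstar m z = 1" and r_pos: "0 < r y z"
    using step(2) mstar_eq_1_iff unfolding star_edges_def by auto
  show ?case
  proof (cases "y = z")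
    case True
    then show ?thesis using K by blast
  next
    case False
    have "(g (xi N z) - g (xi N x0))\<^sup>2 \<le> (2 / r y z + 2 * K) * (real N / (d N)\<^sup>2 * energy r m (d N) N g)"
      for N g
    proof -
      define E where "E = real N / (d N)\<^sup>2 * energy r m (d N) N g"
      have "(g (xi N z) - g (xi N y))\<^sup>2 \<le> real N / ((d N)\<^sup>2 * r y z) * energy r m (d N) N g"
        by (rule energy_ge_star_edge[OF d_pos False y z r_pos])
      also have "\<dots> = 1 / r y z * E"
        unfolding E_def by simp
      finally have "(g (xi N z) - g (xi N y))\<^sup>2 \<le> 1 / r y z * E" .
      moreover have "(g (xi N z) - g (xi N x0))\<^sup>2
          \<le> 2 * (g (xi N z) - g (xi N y))\<^sup>2 + 2 * (g (xi N y) - g (xi N x0))\<^sup>2"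
        by (rule power2_diff_le_triangle)
      ultimately have "(g (xi N z) - g (xi N x0))\<^sup>2 \<le> 2 * (1 / r y z * E) + 2 * (K * E)"
        using K[of g N] unfolding E_def by linarith
      then show ?thesis
        unfolding E_def[symmetric] by (simp add: algebra_simps)
    qed
    then show ?thesis by blast
  qed
qed

lemma star_class_boundary:
  assumes C: "C \<in> star_classes r m" and r_pos: "0 < r x y" and crossing: "(x \<in> C) \<noteq> (y \<in> C)"
  shows "x \<notin> Sstar m \<or> y \<notin> Sstar m"
proof (rule ccontr)
  assume "\<not> ?thesis"
  then have x: "x \<in> Sstar m" and y: "y \<in> Sstar m" by auto
  obtain x0 where C_def: "C = star_class r m x0"
    using C unfolding star_classes_def by auto
  have "mstar m x = 1" "mstar m y = 1"
    using x y mstar_eq_1_iff by auto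
  then have "r y x = r x y"
    using mstar_reversible[of x y] by simp
  then have "(x, y) \<in> star_edges r m" and "(y, x) \<in> star_edges r m"
    using r_pos x y unfolding star_edges_def by auto
  then have "(x0, x) \<in> (star_edges r m)\<^sup>* \<longleftrightarrow> (x0, y) \<in> (star_edges r m)\<^sup>*"
    by (meson rtrancl.rtrancl_into_rtrancl)
  then show False
    using crossing x y unfolding C_def star_class_def by auto
qed

lemma energy_ge_star_class:
  assumes d_pos: "\<And>N. 0 < d N" and C: "C \<in> star_classes r m"
  obtains K where "0 < K" and "\<And>N x y g. x \<in> C \<Longrightarrow> y \<in> C \<Longrightarrow>
    (g (xi N x) - g (xi N y))\<^sup>2 \<le> K * (real N / (d N)\<^sup>2 * energy r m (d N) N g)"
proof -
  obtain x0 where C_def: "C = star_class r m x0"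
    using C unfolding star_classes_def by auto
  define E where "E = (\<lambda>N g. real N / (d N)\<^sup>2 * energy r m (d N) N g)"
  have E_nonneg: "0 \<le> E N g" for N g
    unfolding E_def using energy_nonneg[OF d_pos] by simp
  have "\<exists>K. \<forall>x\<in>C. \<forall>N g. (g (xi N x) - g (xi N x0))\<^sup>2 \<le> K * E N g"
  proof (rule ex_bound_finite_uniform)
    fix x assume "x \<in> C"
    then have "(x0, x) \<in> (star_edges r m)\<^sup>*"
      unfolding C_def star_class_def by auto
    then show "\<exists>K. \<forall>N g. (g (xi N x) - g (xi N x0))\<^sup>2 \<le> K * E N g"
      unfolding E_def by (rule energy_ge_star_path[OF d_pos])
  next
    fix x K K' assume "\<forall>N g. (g (xi N x) - g (xi N x0))\<^sup>2 \<le> K * E N g" "K \<le> K'"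
    then show "\<forall>N g. (g (xi N x) - g (xi N x0))\<^sup>2 \<le> K' * E N g"
      using E_nonneg by (meson mult_right_mono order_trans)
  qed simp
  then obtain K where K: "\<And>x N g. x \<in> C \<Longrightarrow> (g (xi N x) - g (xi N x0))\<^sup>2 \<le> K * E N g"
    by blast
  have "(g (xi N x) - g (xi N y))\<^sup>2 \<le> (4 * max K 1) * E N g" if "x \<in> C" "y \<in> C" for N x y g
  proof -
    have "(g (xi N x) - g (xi N y))\<^sup>2
        \<le> 2 * (g (xi N x) - g (xi N x0))\<^sup>2 + 2 * (g (xi N x0) - g (xi N y))\<^sup>2"
      by (rule power2_diff_le_triangle)
    also have "\<dots> \<le> 4 * (K * E N g)"
      using K[OF that(1), of g N] K[OF that(2), of g N] power2_commute[of "g (xi N x0)" "g (xi N y)"] by linarith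
    also have "\<dots> \<le> 4 * (max K 1 * E N g)"
      using E_nonneg by (simp add: mult_right_mono)
    finally show ?thesis by simp
  qed
  then show ?thesis
    using that[of "4 * max K 1"] unfolding E_def by simp
qed

end

definition cap_ratio :: "('a::finite \<Rightarrow> 'a \<Rightarrow> real) \<Rightarrow> ('a \<Rightarrow> real) \<Rightarrow> real \<Rightarrow> nat
    \<Rightarrow> 'a set \<Rightarrow> ereal"
  where "cap_ratio r m d N C = ereal (Cap r m d N (EN N C) (EN N (Sstar m - C)))
    / (INF p\<in>{(\<eta>, \<zeta>). \<eta> \<in> EN N C \<and> \<zeta> \<in> EN N C \<and> \<eta> \<noteq> \<zeta>}. ereal (Cap r m d N {fst p} {snd p}))"

lemma ereal_divide_le_of_bounds:
  fixes a U L :: real and b :: ereal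
  assumes "0 \<le> a" "a \<le> U" "0 < L" "ereal L \<le> b"
  shows "0 \<le> ereal a / b \<and> ereal a / b \<le> ereal (U / L)"
proof (cases b)
  case (real \<beta>)
  with assms have "L \<le> \<beta>" "0 < \<beta>" by auto
  with real assms show ?thesis
    by (simp add: frac_le)
next
  case PInf
  with assms show ?thesis by simp
next
  case MInf
  with assms show ?thesis by simp
qed

lemma eventually_scale_harm_le_1:
  fixes d :: "nat \<Rightarrow> real"
  assumes d_pos: "\<And>N. 0 < d N" and d_lim: "d \<longlonglongrightarrow> 0" and d_log: "(\<lambda>N. d N * ln (real N)) \<longlonglongrightarrow> 0"
  shows "eventually (\<lambda>N. 1 \<le> N \<and> d N \<le> 1 \<and> d N * harm N \<le> 1) sequentially"
proof -
  have "(\<lambda>N. d N + d N * ln (real N)) \<longlonglongrightarrow> 0"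
    using tendsto_add[OF d_lim d_log] by simp
  then have "eventually (\<lambda>N. d N + d N * ln (real N) < 1) sequentially"
    by (rule order_tendstoD) simp
  moreover have "eventually (\<lambda>N. d N < 1) sequentially"
    using d_lim by (rule order_tendstoD) simp
  ultimately show ?thesis
    using eventually_ge_at_top[of 1]
  proof eventually_elim
    case (elim N)
    then have "d N * harm N \<le> d N * (1 + ln (real N))"
      using harm_le_1_plus_ln d_pos[of N] by (intro mult_left_mono) auto
    with elim show ?case
      by (simp add: algebra_simps)
  qed
qed

context reversible_walk
begin

lemma partition_sum_pos:
  assumes d_pos: "0 < d" and x: "x \<in> Sstar m"
  shows "0 < partition_sum m d N"
proof -
  have "0 < mu_weight m d (xi N x)"
    unfolding mu_weight_def using x mstar_eq_1_iff[of x] wN_pos[OF d_pos]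
    by (intro prod_pos) (auto simp: xi_def)
  also have "\<dots> \<le> partition_sum m d N"
    unfolding partition_sum_def using mu_weight_nonneg[OF d_pos]
    by (intro member_le_sum xi_in_Hn finite_Hn)
  finally show ?thesis .
qed

lemma Cap_nonneg: "0 < d \<Longrightarrow> 0 \<le> Cap r m d N A B"
  unfolding Cap_def Dirichlet_eq_energy partition_sum_def
  using energy_nonneg mu_weight_nonneg by (simp add: sum_nonneg)

lemma Cap_star_class_le:
  assumes d_pos: "0 < d" and d_le_1: "d \<le> 1" and d_harm: "d * harm N \<le> 1" and N: "1 \<le> N"
    and C: "C \<in> star_classes r m"
  shows "Cap r m d N (EN N C) (EN N (Sstar m - C))
    \<le> escape_const r m * d\<^sup>2 / (real N)\<^sup>2 / (2 * partition_sum m d N)"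
proof -
  let ?A = "EN N C" and ?B = "EN N (Sstar m - C)"
  have occupation_xi: "occupation C N (xi N x) = of_bool (x \<in> C)" for x
    using N by (simp add: occupation_def xi_def if_distrib sum.delta cong: if_cong)
  have "inj (xi N :: 'a \<Rightarrow> 'a config)"
    using N by (intro injI) (metis xi_def not_one_le_zero)
  then have "energy r m d N (hit_prob r d N ?A ?B) \<le> energy r m d N (occupation C N)"
    using hit_prob_target[of r, OF r_nonneg d_pos] hit_prob_avoided[of r, OF r_nonneg d_pos]
    by (intro dirichlet_principle[OF d_pos]) (auto simp: EN_def occupation_xi inj_image_mem_iff)
  also have "\<dots> \<le> escape_const r m * d\<^sup>2 / (real N)\<^sup>2"
    using star_class_boundary[OF C] by (intro energy_occupation_le[OF d_pos d_le_1 d_harm]) auto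
  finally show ?thesis
    unfolding Cap_def Dirichlet_eq_energy partition_sum_def
    using mu_weight_nonneg[OF d_pos] by (intro divide_right_mono) (auto intro: sum_nonneg)
qed

lemma Cap_singletons_ge:
  assumes d_pos: "0 < d" and N: "1 \<le> N" and K: "0 < K" and xy: "xi N x \<noteq> xi N y"
    and K_bound: "\<And>g. (g (xi N x) - g (xi N y))\<^sup>2 \<le> K * (real N / d\<^sup>2 * energy r m d N g)"
  shows "d\<^sup>2 / (K * real N) / (2 * partition_sum m d N) \<le> Cap r m d N {xi N x} {xi N y}"
proof -
  let ?h = "hit_prob r d N {xi N x} {xi N y}"
  have "?h (xi N x) = 1" and "?h (xi N y) = 0"
    using hit_prob_target[of r, OF r_nonneg d_pos] hit_prob_avoided[of r, OF r_nonneg d_pos] xy by auto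
  then have "1 \<le> K * (real N / d\<^sup>2 * energy r m d N ?h)"
    using K_bound[of ?h] by simp
  then have "d\<^sup>2 / (K * real N) \<le> energy r m d N ?h"
    using d_pos K N by (simp add: field_simps)
  then show ?thesis
    unfolding Cap_def Dirichlet_eq_energy partition_sum_def
    using mu_weight_nonneg[OF d_pos] by (intro divide_right_mono) (auto intro: sum_nonneg)
qed

lemma cap_ratio_bounds:
  assumes d_pos: "0 < d" and d_le_1: "d \<le> 1" and d_harm: "d * harm N \<le> 1" and N: "1 \<le> N"
    and C: "C \<in> star_classes r m" and K: "0 < K"
    and K_bound: "\<And>x y g. x \<in> C \<Longrightarrow> y \<in> C \<Longrightarrow>
      (g (xi N x) - g (xi N y))\<^sup>2 \<le> K * (real N / d\<^sup>2 * energy r m d N g)"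
  shows "0 \<le> cap_ratio r m d N C \<and> cap_ratio r m d N C \<le> ereal (K * escape_const r m / real N)"
proof -
  obtain x0 where "x0 \<in> Sstar m"
    using C unfolding star_classes_def by auto
  then have Z: "0 < partition_sum m d N"
    by (rule partition_sum_pos[OF d_pos])
  define L where "L = d\<^sup>2 / (K * real N) / (2 * partition_sum m d N)"
  have L_pos: "0 < L"
    unfolding L_def using d_pos K N Z by simp
  have INF_ge: "ereal L \<le> (INF p\<in>{(\<eta>, \<zeta>). \<eta> \<in> EN N C \<and> \<zeta> \<in> EN N C \<and> \<eta> \<noteq> \<zeta>}.
      ereal (Cap r m d N {fst p} {snd p}))"
  proof (rule INF_greatest)
    fix p assume "p \<in> {(\<eta>, \<zeta>). \<eta> \<in> EN N C \<and> \<zeta> \<in> EN N C \<and> \<eta> \<noteq> \<zeta>}"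
    then obtain x y where "x \<in> C" "y \<in> C" "p = (xi N x, xi N y)" "xi N x \<noteq> xi N y"
      unfolding EN_def by auto
    then show "ereal L \<le> ereal (Cap r m d N {fst p} {snd p})"
      unfolding L_def using Cap_singletons_ge[OF d_pos N K] K_bound by simp
  qed
  have "escape_const r m * d\<^sup>2 / (real N)\<^sup>2 / (2 * partition_sum m d N) / L
      = K * escape_const r m / real N"
    unfolding L_def using d_pos K N Z by (simp add: field_simps power2_eq_square)
  then show ?thesis
    using ereal_divide_le_of_bounds[OF Cap_nonneg[OF d_pos] Cap_star_class_le[OF d_pos d_le_1 d_harm N C]
        L_pos INF_ge]
    unfolding cap_ratio_def by simp
qed

lemma cap_ratio_tendsto_0:
  fixes d :: "nat \<Rightarrow> real"
  assumes d_pos: "\<And>N. 0 < d N" and d_lim: "d \<longlonglongrightarrow> 0" and d_log: "(\<lambda>N. d N * ln (real N)) \<longlonglongrightarrow> 0"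
    and C: "C \<in> star_classes r m"
  shows "(\<lambda>N. cap_ratio r m (d N) N C) \<longlonglongrightarrow> 0"
proof -
  obtain K where K: "0 < K" and K_bound: "\<And>N x y g. x \<in> C \<Longrightarrow> y \<in> C \<Longrightarrow>
      (g (xi N x) - g (xi N y))\<^sup>2 \<le> K * (real N / (d N)\<^sup>2 * energy r m (d N) N g)"
    using energy_ge_star_class[of d, OF d_pos C] by metis
  have bounds: "eventually (\<lambda>N. 0 \<le> cap_ratio r m (d N) N C
      \<and> cap_ratio r m (d N) N C \<le> ereal (K * escape_const r m / real N)) sequentially"
    using eventually_scale_harm_le_1[of d, OF d_pos d_lim d_log]
  proof (rule eventually_mono)
    fix N assume "1 \<le> N \<and> d N \<le> 1 \<and> d N * harm N \<le> 1"
    then show "0 \<le> cap_ratio r m (d N) N C \<and> cap_ratio r m (d N) N C \<le> ereal (K * escape_const r m / real N)"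
      by (intro cap_ratio_bounds[OF d_pos _ _ _ C K K_bound]) simp_all
  qed
  have lower: "eventually (\<lambda>N. 0 \<le> cap_ratio r m (d N) N C) sequentially"
    and upper: "eventually (\<lambda>N. cap_ratio r m (d N) N C \<le> ereal (K * escape_const r m / real N)) sequentially"
    using bounds by (auto elim: eventually_mono)
  have "(\<lambda>N. ereal (K * escape_const r m / real N)) \<longlonglongrightarrow> ereal 0"
    by (rule tendsto_ereal[OF lim_const_over_n])
  then show ?thesis
    unfolding zero_ereal_def[symmetric] by (rule tendsto_sandwich[OF lower upper tendsto_const])
qed

end

theorem proposition9p1:
  fixes r :: "'a::finite \<Rightarrow> 'a \<Rightarrow> real" and m :: "'a \<Rightarrow> real" and d :: "nat \<Rightarrow> real"
  assumes r_nonneg: "\<forall>x y. 0 \<le> r x y"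
    and irred: "\<forall>x y. (x, y) \<in> {(a, b). 0 < r a b}\<^sup>*"
    and m_nonneg: "\<forall>x. 0 \<le> m x"
    and m_prob: "(\<Sum>x\<in>UNIV. m x) = 1"
    and reversible: "\<forall>x y. m x * r x y = m y * r y x"
    and kappa: "card (star_classes r m) \<ge> 2"
    and d_pos: "\<forall>N. 0 < d N"
    and d_lim: "d \<longlonglongrightarrow> 0"
    and d_log: "(\<lambda>N. d N * ln (real N)) \<longlonglongrightarrow> 0"
    and d_subexp: "\<forall>\<epsilon>>0. filterlim (\<lambda>N. d N * exp (\<epsilon> * real N)) at_top sequentially"
    and d_N2log2: "(\<lambda>N. d N * (real N)\<^sup>2 * (ln (real N))\<^sup>2) \<longlonglongrightarrow> 0"
  shows "\<forall>C\<in>star_classes r m.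
    (\<lambda>N. ereal (Cap r m (d N) N (EN N C) (EN N (Sstar m - C)))
         / (INF p\<in>{(\<eta>, \<zeta>). \<eta> \<in> EN N C \<and> \<zeta> \<in> EN N C \<and> \<eta> \<noteq> \<zeta>}.
              ereal (Cap r m (d N) N {fst p} {snd p})))
    \<longlonglongrightarrow> 0"
proof -
  interpret reversible_walk r m
    using r_nonneg m_nonneg m_prob reversible by unfold_locales auto
  show ?thesis
    using cap_ratio_tendsto_0[of d, OF _ d_lim d_log] d_pos unfolding cap_ratio_def by simp
qed

end
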